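(* For all integers $0\le s\le r$, $$\sum_{\rho=s}^{r}\mathcal G^r_\rho\,a^{(2\rho)}_s=(2r)!\binom rs,\qquad \sum_{\rho=s}^{r}\mathcal G^r_\rho\,a^{(2\rho+1)}_s=(2r+1)!\binom rs .$$
   Context: The integers $\mathcal G^r_\rho$ ($0\le\rho\le r$) are defined by $\mathcal G^0_0=1$, $\mathcal G^r_{-1}=\mathcal G^r_{r+1}=0$, and $\mathcal G^r_\rho=(2r-1)^2\mathcal G^{r-1}_\rho+\mathcal G^{r-1}_{\rho-1}$ for $r\ge1$. Stern's coefficients $a^{(n)}_k$ are the unique numbers such that, for all integers $\rho\ge0$ and real $x$, $\frac{d^{2\rho}}{dx^{2\rho}}\operatorname{sech}x=(-1)^\rho\operatorname{sech}x\sum_{k=0}^{\rho}(-1)^k a^{(2\rho)}_k\tanh^{2k}x$ and $\frac{d^{2\rho+1}}{dx^{2\rho+1}}\operatorname{sech}x=(-1)^{\rho+1}\operatorname{sech}x\,\tanh x\sum_{k=0}^{\rho}(-1)^k a^{(2\rho+1)}_k\tanh^{2k}x$. *)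

theory Defs
  imports "HOL-Analysis.Analysis"
begin

fun G :: "nat \<Rightarrow> nat \<Rightarrow> int" where
  "G 0 \<rho> = (if \<rho> = 0 then 1 else 0)"
| "G (Suc r) \<rho> = (2 * int r + 1)^2 * G r \<rho> + (if \<rho> = 0 then 0 else G r (\<rho> - 1))"

definition sech :: "real \<Rightarrow> real" where
  "sech x = 1 / cosh x"

definition stern :: "nat \<Rightarrow> nat \<Rightarrow> real" where
  "stern n = (THE a. (\<forall>k > n div 2. a k = 0) \<and>
     (\<forall>x::real. ((deriv :: (real \<Rightarrow> real) \<Rightarrow> real \<Rightarrow> real) ^^ n) sech x =
        (if even n
         then (-1)^(n div 2) * sech x * (\<Sum>k\<le>n div 2. (-1)^k * a k * tanh x ^ (2*k))
         else (-1)^(n div 2 + 1) * sech x * tanh x * (\<Sum>k\<le>n div 2. (-1)^k * a k * tanh x ^ (2*k)))))"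

end

theory Submission
  imports Defs "HOL-Computational_Algebra.Polynomial"
begin

text \<open>Differentiating \<open>sech x * p (tanh x)\<close> gives \<open>sech x * (D p) (tanh x)\<close> with
  \<open>D p = (1 - t^2) p' - t p\<close>, so the \<open>n\<close>-th derivative of sech is \<open>sech x * P n (tanh x)\<close>
  with \<open>P n = D^n 1\<close>, and Stern's coefficients are, up to sign, the coefficients of \<open>P n\<close>.
  By the recurrence for \<open>G\<close>, \<open>Q r = \<Sum>\<rho>. G r \<rho> * (-1)^\<rho> * P (2\<rho>)\<close> satisfies
  \<open>Q (r+1) = ((2r+1)^2 - D^2) (Q r)\<close>, whose solution is \<open>Q r = (2r)! (1 - t^2)^r\<close>; that is,
  \<open>\<Prod>j<r. ((2j+1)^2 - d^2/dx^2)\<close> maps sech to \<open>(2r)! sech^(2r+1)\<close>. Comparing the coefficients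
  of \<open>Q r\<close> and of \<open>D (Q r) = -(2r+1)! t (1 - t^2)^r\<close> with the binomial expansion gives both
  identities.\<close>

definition sech_deriv_op :: "real poly \<Rightarrow> real poly" where
  "sech_deriv_op p = pderiv p - pCons 0 p - pCons 0 (pCons 0 (pderiv p))"

definition sech_poly :: "nat \<Rightarrow> real poly" where
  "sech_poly n = (sech_deriv_op ^^ n) 1"

lemma sech_poly_Suc: "sech_poly (Suc n) = sech_deriv_op (sech_poly n)"
  by (simp add: sech_poly_def)

lemma poly_sech_deriv_op:
  "poly (sech_deriv_op p) t = (1 - t\<^sup>2) * poly (pderiv p) t - t * poly p t"
  by (simp add: sech_deriv_op_def power2_eq_square algebra_simps)

lemma coeff_sech_deriv_op:
  "coeff (sech_deriv_op p) i =
     real (Suc i) * coeff p (Suc i) - (if i = 0 then 0 else coeff p (i - 1))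
     - (if i < 2 then 0 else real (i - 1) * coeff p (i - 1))"
  by (cases i; cases "i - 1")
     (auto simp: sech_deriv_op_def coeff_pderiv coeff_pCons split: nat.splits)

lemma sech_deriv_op_add: "sech_deriv_op (p + q) = sech_deriv_op p + sech_deriv_op q"
  by (simp add: sech_deriv_op_def pderiv_add)

lemma sech_deriv_op_smult: "sech_deriv_op (smult c p) = smult c (sech_deriv_op p)"
  by (simp add: sech_deriv_op_def pderiv_smult smult_diff_right)

lemma sech_deriv_op_sum: "sech_deriv_op (sum f A) = (\<Sum>a\<in>A. sech_deriv_op (f a))"
  by (induction A rule: infinite_finite_induct)
     (simp_all add: sech_deriv_op_add sech_deriv_op_def[of 0])

lemma coeff_sech_poly_above_degree: "n < i \<Longrightarrow> coeff (sech_poly n) i = 0"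
  by (induction n arbitrary: i) (auto simp: sech_poly_def coeff_1 coeff_sech_deriv_op)

lemma coeff_sech_poly_parity: "even i \<noteq> even n \<Longrightarrow> coeff (sech_poly n) i = 0"
proof (induction n arbitrary: i)
  case 0
  then show ?case by (cases i) (auto simp: sech_poly_def coeff_1)
next
  case (Suc n)
  then show ?case by (auto simp: sech_poly_Suc coeff_sech_deriv_op)
qed

lemma deriv_sech_times_poly_tanh:
  "deriv (\<lambda>x. sech x * poly p (tanh x)) = (\<lambda>x. sech x * poly (sech_deriv_op p) (tanh x))"
proof
  fix x :: real
  have cosh_pos: "cosh x > 0" by (simp add: cosh_real_pos)
  have "((\<lambda>x. 1 / cosh x * poly p (tanh x)) has_real_derivative
      - sinh x / (cosh x)\<^sup>2 * poly p (tanh x)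
      + 1 / cosh x * (poly (pderiv p) (tanh x) * (1 - (tanh x)\<^sup>2))) (at x)"
    using cosh_pos
    by (auto intro!: derivative_eq_intros DERIV_chain2[OF poly_DERIV]
             simp: power2_eq_square field_simps)
  also have "- sinh x / (cosh x)\<^sup>2 * poly p (tanh x)
      + 1 / cosh x * (poly (pderiv p) (tanh x) * (1 - (tanh x)\<^sup>2))
      = sech x * poly (sech_deriv_op p) (tanh x)"
    using cosh_pos
    by (simp add: poly_sech_deriv_op sech_def tanh_def power2_eq_square field_simps)
  finally show "deriv (\<lambda>x. sech x * poly p (tanh x)) x = sech x * poly (sech_deriv_op p) (tanh x)"
    by (simp add: DERIV_imp_deriv sech_def)
qed

lemma higher_deriv_sech: "(deriv ^^ n) sech = (\<lambda>x. sech x * poly (sech_poly n) (tanh x))"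
  by (induction n) (simp_all add: sech_poly_def deriv_sech_times_poly_tanh)

lemma poly_eq_iff_on_tanh:
  fixes p q :: "real poly"
  shows "(\<forall>x. poly p (tanh x) = poly q (tanh x)) \<longleftrightarrow> p = q"
proof
  assume agree: "\<forall>x. poly p (tanh x) = poly q (tanh x)"
  show "p = q"
  proof (rule ccontr)
    assume "p \<noteq> q"
    then have "finite {t. poly (p - q) t = 0}" by (intro poly_roots_finite) simp
    moreover have "range tanh \<subseteq> {t. poly (p - q) t = 0}" using agree by auto
    ultimately have "finite (range (tanh :: real \<Rightarrow> real))" by (rule finite_subset[rotated])
    moreover have "inj (tanh :: real \<Rightarrow> real)"
      by (rule strict_mono_imp_inj_on[OF tanh_real_strict_mono])
    ultimately have "finite (UNIV :: real set)" by (rule finite_imageD)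
    then show False by (simp add: infinite_UNIV_char_0)
  qed
qed simp

definition stern_sign :: "nat \<Rightarrow> real" where
  "stern_sign n = (-1) ^ (n div 2 + n mod 2)"

text \<open>The polynomial in \<open>tanh x\<close> that multiplies \<open>sech x\<close> in the expansion defining \<open>stern\<close>.\<close>
definition stern_poly :: "nat \<Rightarrow> (nat \<Rightarrow> real) \<Rightarrow> real poly" where
  "stern_poly n a = (\<Sum>k\<le>n div 2. monom (stern_sign n * (-1)^k * a k) (2*k + n mod 2))"

lemma neg_one_power_mult_self: "(-1 :: real) ^ k * (-1) ^ k = 1"
  by (simp flip: power_add)

lemma stern_sign_mult_self: "stern_sign n * stern_sign n = 1"
  by (simp add: stern_sign_def neg_one_power_mult_self)

lemma stern_expansion_eq_stern_poly:
  "(if even n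
    then (-1)^(n div 2) * sech x * (\<Sum>k\<le>n div 2. (-1)^k * a k * tanh x ^ (2*k))
    else (-1)^(n div 2 + 1) * sech x * tanh x * (\<Sum>k\<le>n div 2. (-1)^k * a k * tanh x ^ (2*k)))
   = sech x * poly (stern_poly n a) (tanh x)"
proof -
  have "poly (stern_poly n a) t
      = stern_sign n * t ^ (n mod 2) * (\<Sum>k\<le>n div 2. (-1)^k * a k * t ^ (2*k))" for t
    by (simp add: stern_poly_def poly_sum poly_monom sum_distrib_left power_add algebra_simps)
  moreover have "odd n \<Longrightarrow> n mod 2 = 1" by presburger
  ultimately show ?thesis by (simp add: stern_sign_def)
qed

lemma coeff_stern_poly:
  "coeff (stern_poly n a) i =
     (if even i = even n \<and> i div 2 \<le> n div 2
      then stern_sign n * (-1)^(i div 2) * a (i div 2) else 0)"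
proof -
  have exponent_eq: "2*k + n mod 2 = i \<longleftrightarrow> k = i div 2 \<and> even i = even n" for k
    by (cases "even n"; cases "even i") (auto elim!: evenE oddE, presburger+)
  have "coeff (stern_poly n a) i
      = (\<Sum>k\<le>n div 2. if 2*k + n mod 2 = i then stern_sign n * (-1)^k * a k else 0)"
    by (simp add: stern_poly_def coeff_sum coeff_monom)
  also have "\<dots> = (\<Sum>k\<le>n div 2. if k = i div 2 \<and> even i = even n
                    then stern_sign n * (-1)^(i div 2) * a (i div 2) else 0)"
    by (rule sum.cong) (auto simp: exponent_eq)
  finally show ?thesis by (cases "even i = even n") (simp_all add: sum.delta)
qed

lemma stern_poly_coeff_inverse:
  assumes "k \<le> n div 2"
  shows "stern_sign n * (-1)^k * coeff (stern_poly n a) (2*k + n mod 2) = a k"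
proof -
  have "even (2*k + n mod 2) = even n" by (cases "even n") auto
  then have "coeff (stern_poly n a) (2*k + n mod 2) = stern_sign n * (-1)^k * a k"
    using assms by (simp add: coeff_stern_poly)
  then have "stern_sign n * (-1)^k * coeff (stern_poly n a) (2*k + n mod 2)
      = (stern_sign n * stern_sign n) * ((-1)^k * (-1)^k) * a k"
    by (simp only: ac_simps)
  then show ?thesis by (simp add: stern_sign_mult_self neg_one_power_mult_self)
qed

lemma sech_poly_eq_stern_poly:
  "sech_poly n = stern_poly n (\<lambda>k. stern_sign n * (-1)^k * coeff (sech_poly n) (2*k + n mod 2))"
proof (rule poly_eqI)
  fix i
  show "coeff (sech_poly n) i
      = coeff (stern_poly n (\<lambda>k. stern_sign n * (-1)^k * coeff (sech_poly n) (2*k + n mod 2))) i"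
  proof (cases "even i = even n")
    case True
    then have i: "2 * (i div 2) + n mod 2 = i"
      by (cases "even n"; cases "even i") (auto elim!: evenE oddE)
    have "stern_sign n * (-1)^(i div 2) * (stern_sign n * (-1)^(i div 2) * coeff (sech_poly n) i)
        = (stern_sign n * stern_sign n) * ((-1)^(i div 2) * (-1)^(i div 2)) * coeff (sech_poly n) i"
      by (simp only: ac_simps)
    moreover have "coeff (sech_poly n) i = 0" if "\<not> i div 2 \<le> n div 2"
      using that True by (intro coeff_sech_poly_above_degree) presburger
    ultimately show ?thesis
      using True by (auto simp: coeff_stern_poly i stern_sign_mult_self neg_one_power_mult_self)
  qed (simp add: coeff_stern_poly coeff_sech_poly_parity)
qed

lemma stern_eq_coeff_sech_poly:
  "stern n k = stern_sign n * (-1)^k * coeff (sech_poly n) (2*k + n mod 2)"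
proof -
  define expands_deriv where "expands_deriv = (\<lambda>a. (\<forall>k > n div 2. a k = 0) \<and>
     (\<forall>x::real. ((deriv :: (real \<Rightarrow> real) \<Rightarrow> real \<Rightarrow> real) ^^ n) sech x =
        (if even n
         then (-1)^(n div 2) * sech x * (\<Sum>k\<le>n div 2. (-1)^k * a k * tanh x ^ (2*k))
         else (-1)^(n div 2 + 1) * sech x * tanh x * (\<Sum>k\<le>n div 2. (-1)^k * a k * tanh x ^ (2*k)))))"
  have stern_the: "stern n = (THE a. expands_deriv a)"
    unfolding stern_def expands_deriv_def ..
  have expands_deriv_iff:
    "expands_deriv a \<longleftrightarrow> (\<forall>k > n div 2. a k = 0) \<and> sech_poly n = stern_poly n a" for a
    by (simp add: expands_deriv_def stern_expansion_eq_stern_poly higher_deriv_sech sech_def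
        flip: poly_eq_iff_on_tanh)
  define a0 where "a0 = (\<lambda>k. stern_sign n * (-1)^k * coeff (sech_poly n) (2*k + n mod 2))"
  have "stern n = a0"
    unfolding stern_the
  proof (rule the_equality)
    show "expands_deriv a0"
      using sech_poly_eq_stern_poly[of n]
      by (auto simp: expands_deriv_iff a0_def intro!: coeff_sech_poly_above_degree)
  next
    fix a
    assume "expands_deriv a"
    then have vanish: "\<forall>k > n div 2. a k = 0" and expansion: "sech_poly n = stern_poly n a"
      by (simp_all add: expands_deriv_iff)
    show "a = a0"
    proof
      fix k
      show "a k = a0 k"
        using vanish stern_poly_coeff_inverse[of k n a]
        by (cases "k \<le> n div 2")
           (auto simp: a0_def expansion[symmetric] intro!: coeff_sech_poly_above_degree)
    qed
  qed
  then show ?thesis by (simp add: a0_def)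
qed

lemma stern_eq_0: "n div 2 < k \<Longrightarrow> stern n k = 0"
  by (simp add: stern_eq_coeff_sech_poly coeff_sech_poly_above_degree)

definition one_minus_sq :: "real poly" where
  "one_minus_sq = [:1, 0, -1:]"

lemma poly_one_minus_sq: "poly one_minus_sq t = 1 - t\<^sup>2"
  by (simp add: one_minus_sq_def power2_eq_square)

lemma coeff_one_minus_sq_power:
  assumes "j \<le> r"
  shows "coeff (one_minus_sq ^ r) (2*j) = of_nat (r choose j) * (-1)^j"
proof -
  have monom_form: "one_minus_sq = monom (-1) 2 + 1"
    by (simp add: one_minus_sq_def monom_altdef numeral_2_eq_2 one_pCons)
  have "one_minus_sq ^ r = (\<Sum>k\<le>r. monom (of_nat (r choose k) * (-1)^k) (2*k))"
    unfolding monom_form binomial_ring by (simp add: monom_power of_nat_poly smult_monom mult.commute)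
  then show ?thesis using assms by (simp add: coeff_sum coeff_monom)
qed

lemma poly_pderiv_one_minus_sq_power:
  "poly (pderiv (one_minus_sq ^ r)) t = - 2 * real r * t * (1 - t\<^sup>2) ^ (r - 1)"
  by (simp add: pderiv_power poly_one_minus_sq one_minus_sq_def pderiv_pCons power2_eq_square)

lemma power_pred_mult_self: "x * x ^ (r - 1) * real r = x ^ r * real r"
  by (cases r) auto

lemma sech_deriv_op_one_minus_sq_power:
  "sech_deriv_op (one_minus_sq ^ r) = smult (- (2 * real r + 1)) (pCons 0 (one_minus_sq ^ r))"
proof (rule poly_ext)
  fix t
  have "poly (sech_deriv_op (one_minus_sq ^ r)) t
      = - t * (1 - t\<^sup>2) ^ r - 2 * t * ((1 - t\<^sup>2) * (1 - t\<^sup>2) ^ (r - 1) * real r)"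
    by (simp add: poly_sech_deriv_op poly_pderiv_one_minus_sq_power poly_one_minus_sq algebra_simps)
  also have "\<dots> = poly (smult (- (2 * real r + 1)) (pCons 0 (one_minus_sq ^ r))) t"
    by (simp only: power_pred_mult_self) (simp add: poly_one_minus_sq algebra_simps)
  finally show "poly (sech_deriv_op (one_minus_sq ^ r)) t
      = poly (smult (- (2 * real r + 1)) (pCons 0 (one_minus_sq ^ r))) t" .
qed

lemma sech_deriv_op_X_one_minus_sq_power:
  "sech_deriv_op (pCons 0 (one_minus_sq ^ r))
     = smult (- (2 * real r + 1)) (one_minus_sq ^ r) + smult (2 * real r + 2) (one_minus_sq ^ Suc r)"
proof (rule poly_ext)
  fix t
  have "poly (sech_deriv_op (pCons 0 (one_minus_sq ^ r))) t
      = - t * t * (1 - t\<^sup>2) ^ r + (1 - t\<^sup>2) * (1 - t\<^sup>2) ^ r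
        - 2 * t * t * ((1 - t\<^sup>2) * (1 - t\<^sup>2) ^ (r - 1) * real r)"
    by (simp add: poly_sech_deriv_op pderiv_pCons poly_pderiv_one_minus_sq_power
        poly_one_minus_sq algebra_simps)
  also have "\<dots> = poly (smult (- (2 * real r + 1)) (one_minus_sq ^ r)
                       + smult (2 * real r + 2) (one_minus_sq ^ Suc r)) t"
    by (simp only: power_pred_mult_self)
       (simp add: poly_one_minus_sq algebra_simps power2_eq_square)
  finally show "poly (sech_deriv_op (pCons 0 (one_minus_sq ^ r))) t
      = poly (smult (- (2 * real r + 1)) (one_minus_sq ^ r)
              + smult (2 * real r + 2) (one_minus_sq ^ Suc r)) t" .
qed

lemma G_eq_0_above: "r < \<rho> \<Longrightarrow> G r \<rho> = 0"
  by (induction r arbitrary: \<rho>) auto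

lemma smult_sum_right: "smult c (sum f A) = (\<Sum>a\<in>A. smult c (f a))"
  by (induction A rule: infinite_finite_induct) (simp_all add: smult_add_right)

definition G_sech_poly :: "nat \<Rightarrow> real poly" where
  "G_sech_poly r = (\<Sum>\<rho>\<le>r. smult (of_int (G r \<rho>) * (-1)^\<rho>) (sech_poly (2*\<rho>)))"

lemma G_sech_poly_Suc:
  "G_sech_poly (Suc r)
     = smult ((2 * real r + 1)\<^sup>2) (G_sech_poly r) - sech_deriv_op (sech_deriv_op (G_sech_poly r))"
proof -
  define A where "A = (\<lambda>\<rho>. smult ((2 * real r + 1)\<^sup>2 * (of_int (G r \<rho>) * (-1)^\<rho>)) (sech_poly (2*\<rho>)))"
  define B where "B = (\<lambda>\<rho>. smult ((if \<rho> = 0 then 0 else of_int (G r (\<rho> - 1))) * (-1)^\<rho>)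
                                    (sech_poly (2*\<rho>)))"
  have "G_sech_poly (Suc r) = (\<Sum>\<rho>\<le>Suc r. A \<rho> + B \<rho>)"
    unfolding G_sech_poly_def A_def B_def
    by (rule sum.cong) (auto simp: smult_add_left[symmetric] algebra_simps)
  also have "\<dots> = sum A {..Suc r} + sum B {..Suc r}"
    by (rule sum.distrib)
  also have "sum A {..Suc r} = smult ((2 * real r + 1)\<^sup>2) (G_sech_poly r)"
    by (simp add: A_def G_sech_poly_def smult_sum_right G_eq_0_above)
  also have "sum B {..Suc r} = (\<Sum>\<rho>\<le>r. B (Suc \<rho>))"
    unfolding sum.atMost_Suc_shift by (simp add: B_def del: sum.atMost_Suc)
  also have "\<dots> = - sech_deriv_op (sech_deriv_op (G_sech_poly r))"
    by (simp add: B_def G_sech_poly_def sech_deriv_op_sum sech_deriv_op_smult sech_poly_Suc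
        sum_negf[symmetric])
  finally show ?thesis by simp
qed

lemma G_sech_poly_eq: "G_sech_poly r = smult (fact (2*r)) (one_minus_sq ^ r)"
proof (induction r)
  case 0
  then show ?case by (simp add: G_sech_poly_def sech_poly_def)
next
  case (Suc r)
  have "sech_deriv_op (sech_deriv_op (G_sech_poly r))
      = smult (fact (2*r) * (- (2 * real r + 1)))
          (smult (- (2 * real r + 1)) (one_minus_sq ^ r) + smult (2 * real r + 2) (one_minus_sq ^ Suc r))"
    by (simp only: Suc sech_deriv_op_smult sech_deriv_op_one_minus_sq_power
        sech_deriv_op_X_one_minus_sq_power smult_smult)
  then show ?case
    by (intro poly_eqI)
       (simp add: G_sech_poly_Suc Suc algebra_simps power2_eq_square del: power_Suc)
qed

lemma coeff_sech_poly_even: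
  "(-1)^\<rho> * coeff (sech_poly (2*\<rho>)) (2 * s) = (-1)^s * stern (2*\<rho>) s"
proof -
  have "(-1)^s * stern (2*\<rho>) s
      = ((-1)^s * (-1)^s) * ((-1)^\<rho> * coeff (sech_poly (2*\<rho>)) (2 * s))"
    by (simp add: stern_eq_coeff_sech_poly stern_sign_def ac_simps)
  then show ?thesis by (simp add: neg_one_power_mult_self)
qed

lemma coeff_sech_poly_odd:
  "(-1)^\<rho> * coeff (sech_poly (2*\<rho>+1)) (2 * s+1) = - ((-1)^s * stern (2*\<rho>+1) s)"
proof -
  have "(2*\<rho>+1) div 2 = \<rho>" "(2*\<rho>+1) mod 2 = 1" by presburger+
  then have "- ((-1)^s * stern (2*\<rho>+1) s)
      = ((-1)^s * (-1)^s) * ((-1)^\<rho> * coeff (sech_poly (2*\<rho>+1)) (2 * s+1))"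
    unfolding stern_eq_coeff_sech_poly stern_sign_def by (simp add: ac_simps)
  then show ?thesis by (simp add: neg_one_power_mult_self)
qed

lemma sum_G_stern_even:
  assumes "s \<le> r"
  shows "(\<Sum>\<rho>\<le>r. of_int (G r \<rho>) * stern (2*\<rho>) s) = fact (2*r) * of_nat (r choose s)"
proof -
  have "(-1)^s * (\<Sum>\<rho>\<le>r. of_int (G r \<rho>) * stern (2*\<rho>) s)
      = (\<Sum>\<rho>\<le>r. of_int (G r \<rho>) * ((-1)^\<rho> * coeff (sech_poly (2*\<rho>)) (2 * s)))"
    by (simp add: sum_distrib_left coeff_sech_poly_even mult.left_commute)
  also have "\<dots> = coeff (G_sech_poly r) (2 * s)"
    by (simp add: G_sech_poly_def coeff_sum mult.assoc)
  also have "\<dots> = (-1)^s * (fact (2*r) * of_nat (r choose s))"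
    using assms by (simp add: G_sech_poly_eq coeff_one_minus_sq_power)
  finally show ?thesis by simp
qed

lemma sum_G_stern_odd:
  assumes "s \<le> r"
  shows "(\<Sum>\<rho>\<le>r. of_int (G r \<rho>) * stern (2*\<rho>+1) s) = fact (2*r+1) * of_nat (r choose s)"
proof -
  have "- ((-1)^s * (\<Sum>\<rho>\<le>r. of_int (G r \<rho>) * stern (2*\<rho>+1) s))
      = (\<Sum>\<rho>\<le>r. of_int (G r \<rho>) * ((-1)^\<rho> * coeff (sech_poly (2*\<rho>+1)) (2 * s+1)))"
    unfolding coeff_sech_poly_odd by (simp add: sum_distrib_left sum_negf mult.left_commute)
  also have "\<dots> = coeff (sech_deriv_op (G_sech_poly r)) (2 * s+1)"
    by (simp add: G_sech_poly_def sech_deriv_op_sum sech_deriv_op_smult sech_poly_Suc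
        coeff_sum mult.assoc)
  also have "\<dots> = - ((-1)^s * (fact (2*r+1) * of_nat (r choose s)))"
    using coeff_one_minus_sq_power[OF assms]
    by (simp add: G_sech_poly_eq sech_deriv_op_smult sech_deriv_op_one_minus_sq_power)
       (simp add: algebra_simps)
  finally show ?thesis by simp
qed

theorem mainTheorem3:
  fixes r s :: nat
  assumes "s \<le> r"
  shows "((\<Sum>\<rho>=s..r. of_int (G r \<rho>) * stern (2*\<rho>) s) = fact (2*r) * of_nat (r choose s)) \<and>
         ((\<Sum>\<rho>=s..r. of_int (G r \<rho>) * stern (2*\<rho>+1) s) = fact (2*r+1) * of_nat (r choose s))"
proof -
  have drop_low_terms: "(\<Sum>\<rho>=s..r. of_int (G r \<rho>) * stern (2*\<rho> + e) s)
      = (\<Sum>\<rho>\<le>r. of_int (G r \<rho>) * stern (2*\<rho> + e) s)" if "e < 2" for e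
    using that by (intro sum.mono_neutral_left) (auto simp: stern_eq_0)
  show ?thesis
    using drop_low_terms[of 0] drop_low_terms[of 1]
          sum_G_stern_even[OF assms] sum_G_stern_odd[OF assms]
    by simp
qed

end
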